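(* Let $G$ be a finite simple graph with $n=|V(G)|$, and let $v_1,\dots,v_r$ be a $\beta$-sequence in $G$ such that $d(v_1)+\dots+d(v_r)\le (r-1)n$. Then $r\ge W(G)$.
   Context: Graphs are finite, undirected, without loops or multiple edges; $N(v)$ is the set of vertices adjacent to $v$, $d(v)=|N(v)|$, and $N(v_1,\dots,v_k)=\bigcap_{j=1}^k N(v_j)$. Define $W(G)=\sum_{v\in V(G)}\frac{1}{n-d(v)}$. A sequence $v_1,\dots,v_r$ of vertices is a $\beta$-sequence in $G$ if (i) $d(v_1)=\max\{d(v)\mid v\in V(G)\}$, and (ii) for $2\le i\le r$, $v_i\in N(v_1,\dots,v_{i-1})$ and $d(v_i)=\max\{d(v)\mid v\in N(v_1,\dots,v_{i-1})\}$ (degrees taken in $G$). *)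

theory Defs
  imports Main "HOL-Library.Multiset" Complex_Main
begin

definition simple_graph :: "'a set \<Rightarrow> ('a \<Rightarrow> 'a \<Rightarrow> bool) \<Rightarrow> bool" where
  "simple_graph V E \<longleftrightarrow> finite V \<and> (\<forall>u v. E u v \<longrightarrow> u \<in> V \<and> v \<in> V)
     \<and> (\<forall>u v. E u v \<longrightarrow> E v u) \<and> (\<forall>v. \<not> E v v)"

definition nbhd :: "'a set \<Rightarrow> ('a \<Rightarrow> 'a \<Rightarrow> bool) \<Rightarrow> 'a \<Rightarrow> 'a set" where
  "nbhd V E v = {u \<in> V. E v u}"

definition deg :: "'a set \<Rightarrow> ('a \<Rightarrow> 'a \<Rightarrow> bool) \<Rightarrow> 'a \<Rightarrow> nat" where
  "deg V E v = card (nbhd V E v)"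

definition common_nbhd :: "'a set \<Rightarrow> ('a \<Rightarrow> 'a \<Rightarrow> bool) \<Rightarrow> 'a list \<Rightarrow> 'a set" where
  "common_nbhd V E vs = {u \<in> V. \<forall>w \<in> set vs. E w u}"

definition W :: "'a set \<Rightarrow> ('a \<Rightarrow> 'a \<Rightarrow> bool) \<Rightarrow> real" where
  "W V E = (\<Sum>v\<in>V. 1 / (real (card V) - real (deg V E v)))"

text \<open>beta-sequence v_1,...,v_r (as list vs, 0-indexed, r = length vs \<ge> 1).\<close>
definition beta_seq :: "'a set \<Rightarrow> ('a \<Rightarrow> 'a \<Rightarrow> bool) \<Rightarrow> 'a list \<Rightarrow> bool" where
  "beta_seq V E vs \<longleftrightarrow> vs \<noteq> [] \<and> set vs \<subseteq> V
     \<and> deg V E (vs ! 0) = Max (deg V E ` V)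
     \<and> (\<forall>i. 1 \<le> i \<and> i < length vs \<longrightarrow>
           vs ! i \<in> common_nbhd V E (take i vs)
         \<and> deg V E (vs ! i) = Max (deg V E ` common_nbhd V E (take i vs)))"

end

theory Submission
  imports Defs
begin

text \<open>
  Put \<open>N_i = N(v_1,\<dots>,v_i)\<close>, \<open>N_0 = V\<close>, \<open>p = r - 1\<close> and \<open>x_i = n - d(v_(i+1))\<close>. Every vertex of
  \<open>N_i\<close> contributes at most \<open>1/x_i\<close> to \<open>W(G)\<close>, at most \<open>x_i\<close> vertices lie in \<open>N_i - N_(i+1)\<close>,
  and \<open>x_i \<le> x_p\<close> by the maximality of the degrees along a \<open>\<beta>\<close>-sequence. Downward induction
  on \<open>k\<close> bounds the contribution of \<open>N_k\<close> by \<open>(p - k) + (|N_k| - x_k - \<dots> - x_(p-1)) / x_p\<close>: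
  the \<open>b\<close> vertices of \<open>N_k - N_(k+1)\<close> cost \<open>b/x_k\<close> instead of \<open>b/x_p\<close>, and
  \<open>b/x_k - b/x_p \<le> 1 - x_k/x_p\<close> since \<open>b \<le> x_k \<le> x_p\<close>. For \<open>k = 0\<close> the degree hypothesis
  says \<open>x_0 + \<dots> + x_p \<ge> n\<close>, so the fraction is at most 1.
\<close>

lemma charge_exchange_le:
  fixes a b c :: real
  assumes "0 < a" "a \<le> c" "b \<le> a"
  shows "b / a - b / c \<le> 1 - a / c"
proof -
  have "b * (c - a) / (a * c) \<le> a * (c - a) / (a * c)"
    using assms by (intro divide_right_mono mult_right_mono) auto
  moreover have "b / a - b / c = b * (c - a) / (a * c)" "1 - a / c = a * (c - a) / (a * c)"
    using assms by (simp_all add: field_simps)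
  ultimately show ?thesis by simp
qed

lemma sum_over_chain_le:
  fixes N :: "nat \<Rightarrow> 'a set" and f :: "'a \<Rightarrow> real" and x :: "nat \<Rightarrow> real"
  assumes fin: "finite (N 0)"
    and chain: "\<And>i. i < p \<Longrightarrow> N (Suc i) \<subseteq> N i"
    and x_pos: "\<And>i. i \<le> p \<Longrightarrow> 0 < x i"
    and x_le: "\<And>i. i \<le> p \<Longrightarrow> x i \<le> x p"
    and f_le: "\<And>i v. i \<le> p \<Longrightarrow> v \<in> N i \<Longrightarrow> f v \<le> 1 / x i"
    and card_le: "\<And>i. i < p \<Longrightarrow> real (card (N i - N (Suc i))) \<le> x i"
    and "k \<le> p"
  shows "sum f (N k) \<le> real (p - k) + (real (card (N k)) - (\<Sum>j\<in>{k..<p}. x j)) / x p"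
  using \<open>k \<le> p\<close>
proof (induction k rule: inc_induct)
  case base
  have "sum f (N p) \<le> (\<Sum>v\<in>N p. 1 / x p)"
    by (rule sum_mono) (use f_le in auto)
  then show ?case by simp
next
  case (step k)
  have sub: "N (Suc k) \<subseteq> N k" using chain step(2) .
  have "N i \<subseteq> N 0" if "i \<le> p" for i
    using that by (induction i) (use chain in \<open>auto simp: Suc_le_eq\<close>)
  then have fin_k: "finite (N k)" using fin step(2) by (meson finite_subset less_imp_le)
  define b where "b = real (card (N k - N (Suc k)))"
  define c where "c = real (card (N (Suc k)))"
  define T where "T = (\<Sum>j\<in>{Suc k..<p}. x j)"
  have "sum f (N k - N (Suc k)) \<le> (\<Sum>v\<in>N k - N (Suc k). 1 / x k)"
    by (rule sum_mono) (use f_le step(2) in auto)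
  then have "sum f (N k) \<le> b / x k + (real (p - Suc k) + (c - T) / x p)"
    using sum.subset_diff[OF sub fin_k, of f] step(3) unfolding b_def c_def T_def by simp
  also have "\<dots> \<le> real (p - Suc k) + 1 + (b + c - x k - T) / x p"
  proof -
    have "b / x k - b / x p \<le> 1 - x k / x p"
      using x_pos x_le card_le step(2) unfolding b_def by (intro charge_exchange_le) auto
    moreover have "(b + c - x k - T) / x p = b / x p + (c - T) / x p - x k / x p"
      by (simp add: diff_divide_distrib add_divide_distrib)
    ultimately show ?thesis by linarith
  qed
  also have "\<dots> = real (p - k) + (real (card (N k)) - (\<Sum>j\<in>{k..<p}. x j)) / x p"
  proof -
    have "real (card (N k)) = b + c"
      using card_Diff_subset[OF finite_subset[OF sub fin_k] sub] card_mono[OF fin_k sub]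
      unfolding b_def c_def by simp
    moreover have "(\<Sum>j\<in>{k..<p}. x j) = x k + T"
      using step(2) unfolding T_def by (simp add: sum.atLeast_Suc_lessThan)
    ultimately show ?thesis using step(2) by (simp add: algebra_simps)
  qed
  finally show ?case .
qed

lemma sum_over_chain_le_length:
  fixes N :: "nat \<Rightarrow> 'a set" and f :: "'a \<Rightarrow> real" and x :: "nat \<Rightarrow> real"
  assumes "finite (N 0)"
    and "\<And>i. i < p \<Longrightarrow> N (Suc i) \<subseteq> N i"
    and "\<And>i. i \<le> p \<Longrightarrow> 0 < x i"
    and "\<And>i. i \<le> p \<Longrightarrow> x i \<le> x p"
    and "\<And>i v. i \<le> p \<Longrightarrow> v \<in> N i \<Longrightarrow> f v \<le> 1 / x i"
    and "\<And>i. i < p \<Longrightarrow> real (card (N i - N (Suc i))) \<le> x i"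
    and total: "real (card (N 0)) \<le> (\<Sum>j\<le>p. x j)"
  shows "sum f (N 0) \<le> real (Suc p)"
proof -
  have "sum f (N 0) \<le> real p + (real (card (N 0)) - (\<Sum>j<p. x j)) / x p"
    using sum_over_chain_le[of N p x f 0, OF assms(1-6) le0] by (simp add: atLeast0LessThan)
  moreover have "(real (card (N 0)) - (\<Sum>j<p. x j)) / x p \<le> 1"
    using total assms(3)[of p] by (simp add: lessThan_Suc_atMost[symmetric])
  ultimately show ?thesis by simp
qed

lemma deg_less_card:
  assumes "simple_graph V E" "v \<in> V"
  shows "deg V E v < card V"
proof -
  have fin: "finite V" using assms(1) unfolding simple_graph_def by blast
  have "nbhd V E v \<subseteq> V - {v}"
    using assms(1) unfolding simple_graph_def nbhd_def by auto
  then have "deg V E v \<le> card (V - {v})" unfolding deg_def using fin by (simp add: card_mono)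
  then show ?thesis using assms(2) fin by (metis card_Diff1_less le_less_trans)
qed

lemma common_nbhd_Nil [simp]: "common_nbhd V E [] = V"
  unfolding common_nbhd_def by simp

lemma finite_common_nbhd [simp]: "finite V \<Longrightarrow> finite (common_nbhd V E vs)"
  unfolding common_nbhd_def by simp

lemma common_nbhd_take_Suc:
  "i < length vs \<Longrightarrow>
    common_nbhd V E (take (Suc i) vs) = common_nbhd V E (take i vs) \<inter> nbhd V E (vs ! i)"
  unfolding common_nbhd_def nbhd_def by (auto simp: take_Suc_conv_app_nth)

lemma common_nbhd_take_antimono:
  "i \<le> j \<Longrightarrow> common_nbhd V E (take j vs) \<subseteq> common_nbhd V E (take i vs)"
  using set_take_subset_set_take[of i j vs] unfolding common_nbhd_def by auto

lemma card_diff_nbhd_le: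
  assumes "finite V" "A \<subseteq> V"
  shows "card (A - nbhd V E v) \<le> card V - deg V E v"
proof -
  have "card (A - nbhd V E v) \<le> card (V - nbhd V E v)"
    using assms by (intro card_mono) auto
  also have "\<dots> = card V - deg V E v"
    unfolding deg_def using assms(1) by (simp add: card_Diff_subset nbhd_def)
  finally show ?thesis .
qed

lemma card_common_nbhd_take_diff_le:
  assumes "finite V" "i < length vs"
  shows "card (common_nbhd V E (take i vs) - common_nbhd V E (take (Suc i) vs))
    \<le> card V - deg V E (vs ! i)"
proof -
  have "common_nbhd V E (take i vs) \<subseteq> V" unfolding common_nbhd_def by auto
  then show ?thesis
    using card_diff_nbhd_le[OF assms(1)] by (simp add: common_nbhd_take_Suc[OF assms(2)] Diff_Int)
qed

lemma beta_seq_nth: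
  assumes "beta_seq V E vs" "i < length vs"
  shows "vs ! i \<in> common_nbhd V E (take i vs)"
    and "deg V E (vs ! i) = Max (deg V E ` common_nbhd V E (take i vs))"
  using assms nth_mem[of 0 vs] unfolding beta_seq_def
  by (cases "i = 0"; force)+

lemma beta_seq_deg_le:
  assumes "finite V" "beta_seq V E vs" "i < length vs" "v \<in> common_nbhd V E (take i vs)"
  shows "deg V E v \<le> deg V E (vs ! i)"
  using assms beta_seq_nth(2)[OF assms(2,3)] by simp

lemma beta_seq_deg_antimono:
  assumes "finite V" "beta_seq V E vs" "i \<le> j" "j < length vs"
  shows "deg V E (vs ! j) \<le> deg V E (vs ! i)"
  using assms beta_seq_nth(1)[OF assms(2,4)] common_nbhd_take_antimono[OF assms(3), of V E vs]
  by (intro beta_seq_deg_le) auto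

theorem theorem2:
  fixes V :: "'a set" and E :: "'a \<Rightarrow> 'a \<Rightarrow> bool" and vs :: "'a list"
  assumes "simple_graph V E"
    and "beta_seq V E vs"
    and "(\<Sum>i<length vs. real (deg V E (vs ! i))) \<le> (real (length vs) - 1) * real (card V)"
  shows "real (length vs) \<ge> W V E"
proof -
  have fin: "finite V" using assms(1) unfolding simple_graph_def by blast
  define p where "p = length vs - 1"
  have len: "length vs = Suc p" using assms(2) unfolding beta_seq_def p_def by (cases vs) auto
  define N where "N i = common_nbhd V E (take i vs)" for i
  define w where "w v = real (card V) - real (deg V E v)" for v
  have deg_less: "deg V E (vs ! i) < card V" if "i \<le> p" for i
    using assms(2) len that unfolding beta_seq_def by (intro deg_less_card[OF assms(1)]) auto
  have "sum (\<lambda>v. 1 / w v) (N 0) \<le> real (Suc p)"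
  proof (rule sum_over_chain_le_length[where x = "\<lambda>i. w (vs ! i)"])
    show "finite (N 0)" using fin unfolding N_def by simp
    show "N (Suc i) \<subseteq> N i" for i unfolding N_def by (rule common_nbhd_take_antimono) simp
    show "0 < w (vs ! i)" if "i \<le> p" for i using deg_less[OF that] unfolding w_def by simp
    show "w (vs ! i) \<le> w (vs ! p)" if "i \<le> p" for i
      using beta_seq_deg_antimono[OF fin assms(2) that] len unfolding w_def by simp
    show "1 / w v \<le> 1 / w (vs ! i)" if "i \<le> p" "v \<in> N i" for i v
      using beta_seq_deg_le[OF fin assms(2)] that len deg_less[OF that(1)]
      unfolding N_def w_def by (simp add: frac_le)
    show "real (card (N i - N (Suc i))) \<le> w (vs ! i)" if "i < p" for i
      using card_common_nbhd_take_diff_le[OF fin, of i vs E] deg_less[of i] that len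
      unfolding N_def w_def by (simp flip: of_nat_le_iff)
    show "real (card (N 0)) \<le> (\<Sum>j\<le>p. w (vs ! j))"
      using assms(3) len unfolding N_def w_def
      by (simp add: sum_subtractf lessThan_Suc_atMost[symmetric] algebra_simps)
  qed
  then show ?thesis unfolding W_def N_def w_def len by simp
qed

end
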